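(* Let $m\ge0$, let $f:\mathbb{R}^n\to\mathbb{R}$ be $m$-weakly convex, let $x\in\mathbb{R}^n$, $\rho>0$, $\alpha=m+\rho$, and $\Delta:=f(x)-f_\alpha(x)$. Let $\hat x=\arg\min_y\{f(y)+\frac\alpha2\|y-x\|^2\}$ and $w=\rho(x-\hat x)$. Then $w\in\partial_\Delta f(x)$ and $\|w\|\le\sqrt{2\rho\Delta}$; consequently $x$ is a $(\sqrt{2\rho\Delta},\Delta)$-inexact stationary point (i.e. $\mathrm{dist}(0,\partial_\Delta f(x))\le\sqrt{2\rho\Delta}$), and $x$ is a $(\sqrt{2\alpha^2\Delta/\rho},\alpha)$-Moreau stationary point.
   Context: A function $f$ is $m$-weakly convex ($m\ge 0$) if $x\mapsto f(x)+\frac{m}{2}\|x\|^2$ is convex. For $\epsilon\ge 0$, $\partial_\epsilon f(x)=\{v\in\mathbb{R}^n: f(y)\ge f(x)+\langle v,y-x\rangle-\frac{m}{2}\|y-x\|^2-\epsilon\ \ \forall y\}$. A point $x$ is an $(\eta,\epsilon)$-inexact stationary point if $\mathrm{dist}(0,\partial_\epsilon f(x))\le\eta$. For $\rho>m$ the Moreau envelope is $f_\rho(x)=\inf_{y}\{f(y)+\frac{\rho}{2}\|y-x\|^2\}$, continuously differentiable with $\nabla f_\rho(x)=\rho(x-\hat x)$; $x$ is a $(\delta,\alpha)$-Moreau stationary point if $\|\nabla f_\alpha(x)\|\le\delta$. *)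

theory Defs
  imports "HOL-Analysis.Analysis"
begin

definition weakly_convex :: "real \<Rightarrow> ('a::euclidean_space \<Rightarrow> real) \<Rightarrow> bool" where
  "weakly_convex m f \<longleftrightarrow> m \<ge> 0 \<and> convex_on UNIV (\<lambda>x. f x + m / 2 * (norm x)\<^sup>2)"

definition eps_subdiff :: "real \<Rightarrow> ('a::euclidean_space \<Rightarrow> real) \<Rightarrow> real \<Rightarrow> 'a \<Rightarrow> 'a set" where
  "eps_subdiff m f \<epsilon> x =
     {v. \<forall>y. f y \<ge> f x + inner v (y - x) - m / 2 * (norm (y - x))\<^sup>2 - \<epsilon>}"

definition inexact_stationary :: "real \<Rightarrow> ('a::euclidean_space \<Rightarrow> real) \<Rightarrow> real \<Rightarrow> real \<Rightarrow> 'a \<Rightarrow> bool" where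
  "inexact_stationary m f \<eta> \<epsilon> x \<longleftrightarrow> infdist 0 (eps_subdiff m f \<epsilon> x) \<le> \<eta>"

definition moreau_env :: "('a::euclidean_space \<Rightarrow> real) \<Rightarrow> real \<Rightarrow> 'a \<Rightarrow> real" where
  "moreau_env f \<rho> x = (INF y. f y + \<rho> / 2 * (norm (y - x))\<^sup>2)"

definition moreau_stationary :: "('a::euclidean_space \<Rightarrow> real) \<Rightarrow> real \<Rightarrow> real \<Rightarrow> 'a \<Rightarrow> bool" where
  "moreau_stationary f \<delta> \<alpha> x \<longleftrightarrow>
     (\<exists>g. (moreau_env f \<alpha> has_derivative (\<lambda>h. inner g h)) (at x) \<and> norm g \<le> \<delta>)"

end

theory Submission
  imports Defs
begin

(* The proximal objective g y = f y + alpha/2 |y - x|^2 is rho-strongly convex, because f is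
   m-weakly convex and alpha = m + rho. Hence its minimiser xh has quadratic growth
   g y >= g xh + rho/2 |y - xh|^2. At y = x this gives Delta >= rho/2 |x - xh|^2, which bounds
   both |w| and |alpha (x - xh)|. Expanding the growth inequality around x shows that w is a
   Delta-subgradient, and squeezing the envelope at x + e between its value at the test point xh
   and the growth bound shows that it is differentiable at x with gradient alpha (x - xh). *)

lemma norm_convex_combination_sq:
  fixes a b :: "'a::real_inner"
  shows "(norm ((1 - t) *\<^sub>R a + t *\<^sub>R b))\<^sup>2 =
     (1 - t) * (norm a)\<^sup>2 + t * (norm b)\<^sup>2 - t * (1 - t) * (norm (a - b))\<^sup>2"
  unfolding power2_norm_eq_inner
  by (simp add: inner_add_left inner_add_right inner_diff_left inner_diff_right inner_commute
      algebra_simps)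

lemma le_of_forall_less_one_mult:
  fixes a b :: real
  assumes "\<And>t. 0 < t \<Longrightarrow> t < 1 \<Longrightarrow> (1 - t) * b \<le> a"
  shows "b \<le> a"
proof (rule tendsto_upperbound)
  show "((\<lambda>t. (1 - t) * b) \<longlongrightarrow> b) (at_right 0)"
    by (auto intro!: tendsto_eq_intros)
  show "\<forall>\<^sub>F t in at_right 0. (1 - t) * b \<le> a"
    unfolding eventually_at_right_field using assms by (intro exI[of _ 1]) auto
qed simp

lemma inner_le_Young:
  fixes v e :: "'a::real_inner"
  assumes "c > 0"
  shows "a * inner v e \<le> c / 2 * (norm v)\<^sup>2 + a\<^sup>2 / (2 * c) * (norm e)\<^sup>2"
proof -
  have "(norm (c *\<^sub>R v - a *\<^sub>R e))\<^sup>2 = c\<^sup>2 * (norm v)\<^sup>2 - 2 * c * a * inner v e + a\<^sup>2 * (norm e)\<^sup>2"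
    unfolding power2_norm_eq_inner
    by (simp add: inner_diff_left inner_diff_right inner_commute algebra_simps power2_eq_square)
  then have "0 \<le> c\<^sup>2 * (norm v)\<^sup>2 - 2 * c * a * inner v e + a\<^sup>2 * (norm e)\<^sup>2"
    by (metis zero_le_power2)
  with assms show ?thesis
    by (simp add: field_simps power2_eq_square)
qed

lemma norm_scaleR_le_sqrt:
  assumes "c > 0" and "c / 2 * (norm d)\<^sup>2 \<le> \<Delta>"
  shows "norm (a *\<^sub>R d) \<le> sqrt (2 * a\<^sup>2 * \<Delta> / c)"
proof (rule real_le_rsqrt)
  have "(norm d)\<^sup>2 \<le> 2 * \<Delta> / c"
    using assms by (simp add: field_simps)
  then have "a\<^sup>2 * (norm d)\<^sup>2 \<le> a\<^sup>2 * (2 * \<Delta> / c)"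
    by (rule mult_left_mono) simp
  then show "(norm (a *\<^sub>R d))\<^sup>2 \<le> 2 * a\<^sup>2 * \<Delta> / c"
    by (simp add: power_mult_distrib ac_simps)
qed

lemma has_derivative_quadratic_remainder:
  fixes F :: "'a::real_normed_vector \<Rightarrow> real"
  assumes "bounded_linear L"
    and remainder: "\<And>e. \<bar>F (x + e) - F x - L e\<bar> \<le> K * (norm e)\<^sup>2"
  shows "(F has_derivative L) (at x)"
proof -
  have "\<forall>\<^sub>F y in at x. norm (norm (F y - F x - L (y - x)) / norm (y - x)) \<le> K * norm (y - x)"
    unfolding eventually_at_filter
  proof (intro always_eventually allI impI)
    fix y assume "y \<noteq> x"
    then have "\<bar>F y - F x - L (y - x)\<bar> / norm (y - x) \<le> K * (norm (y - x))\<^sup>2 / norm (y - x)"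
      using remainder[of "y - x"] by (intro divide_right_mono) auto
    with \<open>y \<noteq> x\<close> show "norm (norm (F y - F x - L (y - x)) / norm (y - x)) \<le> K * norm (y - x)"
      by (simp add: power2_eq_square)
  qed
  moreover have "((\<lambda>y. K * norm (y - x)) \<longlongrightarrow> 0) (at x)"
    by (intro tendsto_mult_right_zero tendsto_norm_zero LIM_zero tendsto_ident_at)
  ultimately have "((\<lambda>y. norm (F y - F x - L (y - x)) / norm (y - x)) \<longlongrightarrow> 0) (at x)"
    by (rule Lim_null_comparison)
  then show ?thesis
    using assms(1) by (simp add: has_derivative_iff_norm)
qed

lemma quadratic_growth_at_minimum:
  fixes g :: "'a::real_inner \<Rightarrow> real"
  assumes cvx: "convex_on UNIV (\<lambda>y. g y - c / 2 * (norm y)\<^sup>2)"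
    and min: "\<And>y. g z \<le> g y"
  shows "g z + c / 2 * (norm (y - z))\<^sup>2 \<le> g y"
proof -
  let ?h = "\<lambda>y. g y - c / 2 * (norm y)\<^sup>2"
  (* Minimality of z against the point z + t (y - z) gives the bound up to the factor 1 - t. *)
  have "(1 - t) * (c / 2 * (norm (y - z))\<^sup>2) \<le> g y - g z" if t: "0 < t" "t < 1" for t
  proof -
    let ?zt = "(1 - t) *\<^sub>R z + t *\<^sub>R y"
    have "g z \<le> ?h ?zt + c / 2 * (norm ?zt)\<^sup>2"
      using min[of ?zt] by simp
    also have "\<dots> \<le> (1 - t) * ?h z + t * ?h y + c / 2 * (norm ?zt)\<^sup>2"
      using convex_onD[OF cvx, of t z y] t by simp
    also have "\<dots> = (1 - t) * g z + t * g y - t * ((1 - t) * (c / 2 * (norm (y - z))\<^sup>2))"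
      unfolding norm_convex_combination_sq
      by (simp add: norm_minus_commute algebra_simps diff_divide_distrib add_divide_distrib)
    finally have "t * ((1 - t) * (c / 2 * (norm (y - z))\<^sup>2)) \<le> t * (g y - g z)"
      by (simp add: algebra_simps)
    then show ?thesis using t by simp
  qed
  then have "c / 2 * (norm (y - z))\<^sup>2 \<le> g y - g z"
    by (rule le_of_forall_less_one_mult)
  then show ?thesis by simp
qed

lemma weakly_convex_prox_strongly_convex:
  fixes f :: "'a::euclidean_space \<Rightarrow> real"
  assumes "weakly_convex m f"
  shows "convex_on UNIV (\<lambda>y. f y + \<alpha> / 2 * (norm (y - x))\<^sup>2 - (\<alpha> - m) / 2 * (norm y)\<^sup>2)"
proof -
  have "convex_on UNIV (\<lambda>y. f y + m / 2 * (norm y)\<^sup>2)"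
    using assms unfolding weakly_convex_def by simp
  moreover have "convex_on UNIV (\<lambda>y. inner (- \<alpha> *\<^sub>R x) y + \<alpha> / 2 * (norm x)\<^sup>2)"
    by (rule convex_onI) (simp_all add: inner_add_right algebra_simps diff_divide_distrib)
  ultimately have "convex_on UNIV
      (\<lambda>y. (f y + m / 2 * (norm y)\<^sup>2) + (inner (- \<alpha> *\<^sub>R x) y + \<alpha> / 2 * (norm x)\<^sup>2))"
    by (rule convex_on_add)
  also have "(\<lambda>y. (f y + m / 2 * (norm y)\<^sup>2) + (inner (- \<alpha> *\<^sub>R x) y + \<alpha> / 2 * (norm x)\<^sup>2))
      = (\<lambda>y. f y + \<alpha> / 2 * (norm (y - x))\<^sup>2 - (\<alpha> - m) / 2 * (norm y)\<^sup>2)"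
    unfolding power2_norm_eq_inner
    by (rule ext)
      (simp add: inner_diff_left inner_diff_right inner_commute algebra_simps diff_divide_distrib)
  finally show ?thesis .
qed

lemma moreau_env_le:
  assumes "bdd_below (range (\<lambda>y. f y + \<alpha> / 2 * (norm (y - z))\<^sup>2))"
  shows "moreau_env f \<alpha> z \<le> f y + \<alpha> / 2 * (norm (y - z))\<^sup>2"
  unfolding moreau_env_def using assms by (rule cINF_lower) simp

lemma moreau_env_ge:
  assumes "\<And>y. b \<le> f y + \<alpha> / 2 * (norm (y - z))\<^sup>2"
  shows "b \<le> moreau_env f \<alpha> z"
  unfolding moreau_env_def using assms by (intro cINF_greatest) auto

lemma moreau_env_eq_minimum:
  assumes "\<And>y. f xh + \<alpha> / 2 * (norm (xh - x))\<^sup>2 \<le> f y + \<alpha> / 2 * (norm (y - x))\<^sup>2"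
  shows "moreau_env f \<alpha> x = f xh + \<alpha> / 2 * (norm (xh - x))\<^sup>2"
proof (rule antisym)
  show "moreau_env f \<alpha> x \<le> f xh + \<alpha> / 2 * (norm (xh - x))\<^sup>2"
    using assms by (intro moreau_env_le bdd_belowI2)
  show "f xh + \<alpha> / 2 * (norm (xh - x))\<^sup>2 \<le> moreau_env f \<alpha> x"
    using assms by (rule moreau_env_ge)
qed

lemma moreau_env_has_derivative:
  fixes f :: "'a::euclidean_space \<Rightarrow> real"
  assumes "c > 0"
    and growth: "\<And>y. f xh + \<alpha> / 2 * (norm (xh - x))\<^sup>2 + c / 2 * (norm (y - xh))\<^sup>2
                    \<le> f y + \<alpha> / 2 * (norm (y - x))\<^sup>2"
  shows "(moreau_env f \<alpha> has_derivative (\<lambda>h. inner (\<alpha> *\<^sub>R (x - xh)) h)) (at x)"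
proof (rule has_derivative_quadratic_remainder)
  let ?K = "\<bar>\<alpha>\<bar> / 2 + \<alpha>\<^sup>2 / (2 * c)"
  define d where "d = x - xh"
  define p where "p = f xh + \<alpha> / 2 * (norm (xh - x))\<^sup>2"
  have shifted_sq: "\<alpha> / 2 * (norm (u - (x + e)))\<^sup>2
      = \<alpha> / 2 * (norm (u - x))\<^sup>2 - \<alpha> * inner (u - x) e + \<alpha> / 2 * (norm e)\<^sup>2" for u e
    unfolding power2_norm_eq_inner
    by (simp add: inner_diff_left inner_diff_right inner_commute algebra_simps)
  have "p \<le> f y + \<alpha> / 2 * (norm (y - x))\<^sup>2" for y
  proof -
    have "0 \<le> c / 2 * (norm (y - xh))\<^sup>2"
      using \<open>c > 0\<close> by simp
    then show ?thesis
      using growth[of y] unfolding p_def by linarith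
  qed
  then have env_x: "moreau_env f \<alpha> x = p"
    unfolding p_def by (rule moreau_env_eq_minimum)
  fix e
  (* The envelope at x + e lies above the quadratic growth bound (via Young's inequality) and
     below the objective at the test point xh; both bounds agree up to O(|e|^2). *)
  have lower: "p + \<alpha> * inner d e + \<alpha> / 2 * (norm e)\<^sup>2 - \<alpha>\<^sup>2 / (2 * c) * (norm e)\<^sup>2
      \<le> f y + \<alpha> / 2 * (norm (y - (x + e)))\<^sup>2" for y
  proof -
    have "inner (y - x) e = inner (y - xh) e - inner d e"
      unfolding d_def by (simp add: inner_diff_left)
    moreover have "\<alpha> * inner (y - xh) e \<le> c / 2 * (norm (y - xh))\<^sup>2 + \<alpha>\<^sup>2 / (2 * c) * (norm e)\<^sup>2"
      using \<open>c > 0\<close> by (rule inner_le_Young)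
    ultimately show ?thesis
      using growth[of y] unfolding p_def shifted_sq by (simp add: right_diff_distrib)
  qed
  have upper: "moreau_env f \<alpha> (x + e) \<le> p + \<alpha> * inner d e + \<alpha> / 2 * (norm e)\<^sup>2"
  proof -
    have "moreau_env f \<alpha> (x + e) \<le> f xh + \<alpha> / 2 * (norm (xh - (x + e)))\<^sup>2"
      using lower by (intro moreau_env_le bdd_belowI2)
    then show ?thesis
      unfolding p_def d_def shifted_sq by (simp add: inner_diff_left algebra_simps)
  qed
  have "p + \<alpha> * inner d e + \<alpha> / 2 * (norm e)\<^sup>2 - \<alpha>\<^sup>2 / (2 * c) * (norm e)\<^sup>2 \<le> moreau_env f \<alpha> (x + e)"
    using lower by (rule moreau_env_ge)
  moreover have "0 \<le> \<alpha>\<^sup>2 / (2 * c)"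
    using \<open>c > 0\<close> by simp
  then have "\<alpha> / 2 * (norm e)\<^sup>2 \<le> ?K * (norm e)\<^sup>2"
    "- ?K * (norm e)\<^sup>2 \<le> (\<alpha> / 2 - \<alpha>\<^sup>2 / (2 * c)) * (norm e)\<^sup>2"
    by (intro mult_right_mono zero_le_power2; linarith)+
  ultimately show "\<bar>moreau_env f \<alpha> (x + e) - moreau_env f \<alpha> x - inner (\<alpha> *\<^sub>R (x - xh)) e\<bar>
      \<le> ?K * (norm e)\<^sup>2"
    using upper unfolding env_x d_def abs_le_iff inner_scaleR_left left_diff_distrib mult_minus_left
    by linarith
qed (rule bounded_linear_inner_right)

lemma prox_residual_in_eps_subdiff:
  fixes f :: "'a::euclidean_space \<Rightarrow> real"
  assumes "\<rho> \<ge> 0"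
    and growth: "\<And>y. f xh + (m + \<rho>) / 2 * (norm (xh - x))\<^sup>2 + \<rho> / 2 * (norm (y - xh))\<^sup>2
                    \<le> f y + (m + \<rho>) / 2 * (norm (y - x))\<^sup>2"
  shows "\<rho> *\<^sub>R (x - xh) \<in> eps_subdiff m f (f x - (f xh + (m + \<rho>) / 2 * (norm (xh - x))\<^sup>2)) x"
  unfolding eps_subdiff_def
proof (intro CollectI allI)
  fix y
  have "(norm (y - xh))\<^sup>2 = (norm (y - x))\<^sup>2 + 2 * inner (x - xh) (y - x) + (norm (x - xh))\<^sup>2"
    unfolding power2_norm_eq_inner
    by (simp add: inner_diff_left inner_diff_right inner_commute algebra_simps)
  then have "\<rho> / 2 * (norm (y - xh))\<^sup>2
      = \<rho> / 2 * (norm (y - x))\<^sup>2 + \<rho> * inner (x - xh) (y - x) + \<rho> / 2 * (norm (x - xh))\<^sup>2"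
    by (simp add: distrib_left)
  moreover have "(m + \<rho>) / 2 * (norm (y - x))\<^sup>2 = m / 2 * (norm (y - x))\<^sup>2 + \<rho> / 2 * (norm (y - x))\<^sup>2"
    by (simp add: add_divide_distrib distrib_right)
  moreover have "0 \<le> \<rho> / 2 * (norm (x - xh))\<^sup>2"
    using assms(1) by simp
  ultimately show "f x + inner (\<rho> *\<^sub>R (x - xh)) (y - x) - m / 2 * (norm (y - x))\<^sup>2
      - (f x - (f xh + (m + \<rho>) / 2 * (norm (xh - x))\<^sup>2)) \<le> f y"
    using growth[of y] unfolding inner_scaleR_left by linarith
qed

theorem mainTheorem9:
  fixes f :: "'a::euclidean_space \<Rightarrow> real" and m \<rho> \<alpha> \<Delta> :: real and x xh w :: 'a
  assumes "m \<ge> 0"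
    and "weakly_convex m f"
    and "\<rho> > 0"
    and "\<alpha> = m + \<rho>"
    and "\<Delta> = f x - moreau_env f \<alpha> x"
    and "\<forall>y. f xh + \<alpha> / 2 * (norm (xh - x))\<^sup>2 \<le> f y + \<alpha> / 2 * (norm (y - x))\<^sup>2"
    and "w = \<rho> *\<^sub>R (x - xh)"
  shows "w \<in> eps_subdiff m f \<Delta> x \<and> norm w \<le> sqrt (2 * \<rho> * \<Delta>)
         \<and> inexact_stationary m f (sqrt (2 * \<rho> * \<Delta>)) \<Delta> x
         \<and> moreau_stationary f (sqrt (2 * \<alpha>\<^sup>2 * \<Delta> / \<rho>)) \<alpha> x"
proof -
  have growth: "f xh + \<alpha> / 2 * (norm (xh - x))\<^sup>2 + \<rho> / 2 * (norm (y - xh))\<^sup>2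
      \<le> f y + \<alpha> / 2 * (norm (y - x))\<^sup>2" for y
    using quadratic_growth_at_minimum[where g = "\<lambda>y. f y + \<alpha> / 2 * (norm (y - x))\<^sup>2",
        OF weakly_convex_prox_strongly_convex[OF assms(2)]] assms(4,6) by simp
  have env: "moreau_env f \<alpha> x = f xh + \<alpha> / 2 * (norm (xh - x))\<^sup>2"
    using assms(6) by (intro moreau_env_eq_minimum) simp
  have gap: "\<rho> / 2 * (norm (x - xh))\<^sup>2 \<le> \<Delta>"
    using growth[of x] unfolding assms(5) env by (simp add: norm_minus_commute)
  have subgradient: "w \<in> eps_subdiff m f \<Delta> x"
    using prox_residual_in_eps_subdiff[of \<rho> f xh m x] growth assms(3,4,5,7) env by simp
  have "2 * \<rho>\<^sup>2 * \<Delta> / \<rho> = 2 * \<rho> * \<Delta>"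
    using assms(3) by (simp add: power2_eq_square)
  then have norm_w: "norm w \<le> sqrt (2 * \<rho> * \<Delta>)"
    using norm_scaleR_le_sqrt[OF assms(3) gap, of \<rho>] assms(7) by simp
  have "inexact_stationary m f (sqrt (2 * \<rho> * \<Delta>)) \<Delta> x"
    unfolding inexact_stationary_def using infdist_le[OF subgradient, of 0] norm_w by simp
  moreover have "moreau_stationary f (sqrt (2 * \<alpha>\<^sup>2 * \<Delta> / \<rho>)) \<alpha> x"
    unfolding moreau_stationary_def
    using moreau_env_has_derivative[OF assms(3) growth] norm_scaleR_le_sqrt[OF assms(3) gap] by blast
  ultimately show ?thesis
    using subgradient norm_w by blast
qed

end
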